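(* The variety $\mathsf{V}(S_{(4,390)})$ is the ai-semiring variety defined by the identities $x^2y\approx xy$; $xyz\approx yxz$; $x^2y^2\approx (xy)^2$; $x^2y^2\approx y^2x^2$; $xyz\approx xyz+y$, $xy\approx xy+y$, $yz\approx yz+y$; $x^2+yz\approx x^2yz$; $x_1x_2^2+x_3x_4^2\approx x_1x_2x_3x_4^2$; and $x_1x_2+x_3x_4\approx x_1x_2+x_3x_4+x_1x_3^2$.
   Context: An ai-semiring is an algebra $(S,+,\cdot)$ with $(S,+)$ a semilattice, $(S,\cdot)$ a semigroup, and both distributive laws. $\mathsf{V}(S)$ is the variety generated by $S$; "the ai-semiring variety defined by identities $\Sigma$" is the class of all ai-semirings satisfying $\Sigma$. $S_{(4,390)}$ has carrier $\{1,2,3,4\}$; addition: $x+x=x$, $2+x=x$, $1+x=1$ for all $x$, $3+4=1$; multiplication (row $a$, column $b$ gives $a\cdot b$): row $1$: $1,1,1,1$; row $2$: $1,2,1,4$; row $3$: $1,1,1,1$; row $4$: $1,1,1,1$. *)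

theory Defs
  imports Main
begin

datatype trm = V nat | Pl trm trm | Ml trm trm

fun eval :: "('a \<Rightarrow> 'a \<Rightarrow> 'a) \<Rightarrow> ('a \<Rightarrow> 'a \<Rightarrow> 'a) \<Rightarrow> (nat \<Rightarrow> 'a) \<Rightarrow> trm \<Rightarrow> 'a" where
  "eval ad mu \<rho> (V i) = \<rho> i"
| "eval ad mu \<rho> (Pl s t) = ad (eval ad mu \<rho> s) (eval ad mu \<rho> t)"
| "eval ad mu \<rho> (Ml s t) = mu (eval ad mu \<rho> s) (eval ad mu \<rho> t)"

definition ai_semiring :: "'a set \<Rightarrow> ('a \<Rightarrow> 'a \<Rightarrow> 'a) \<Rightarrow> ('a \<Rightarrow> 'a \<Rightarrow> 'a) \<Rightarrow> bool" where
  "ai_semiring A ad mu \<longleftrightarrow>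
     (\<forall>x\<in>A. \<forall>y\<in>A. ad x y \<in> A \<and> mu x y \<in> A) \<and>
     (\<forall>x\<in>A. \<forall>y\<in>A. \<forall>z\<in>A. ad (ad x y) z = ad x (ad y z)) \<and>
     (\<forall>x\<in>A. \<forall>y\<in>A. ad x y = ad y x) \<and>
     (\<forall>x\<in>A. ad x x = x) \<and>
     (\<forall>x\<in>A. \<forall>y\<in>A. \<forall>z\<in>A. mu (mu x y) z = mu x (mu y z)) \<and>
     (\<forall>x\<in>A. \<forall>y\<in>A. \<forall>z\<in>A. mu x (ad y z) = ad (mu x y) (mu x z)) \<and>
     (\<forall>x\<in>A. \<forall>y\<in>A. \<forall>z\<in>A. mu (ad y z) x = ad (mu y x) (mu z x))"

definition sat :: "'a set \<Rightarrow> ('a \<Rightarrow> 'a \<Rightarrow> 'a) \<Rightarrow> ('a \<Rightarrow> 'a \<Rightarrow> 'a) \<Rightarrow> trm \<times> trm \<Rightarrow> bool" where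
  "sat A ad mu e \<longleftrightarrow> (\<forall>\<rho>. (\<forall>i. \<rho> i \<in> A) \<longrightarrow> eval ad mu \<rho> (fst e) = eval ad mu \<rho> (snd e))"

definition S390 :: "nat set" where "S390 = {1,2,3,4}"

definition add390 :: "nat \<Rightarrow> nat \<Rightarrow> nat" where
  "add390 a b = (if a = b then a else if a = 2 then b else if b = 2 then a else 1)"

definition mul390 :: "nat \<Rightarrow> nat \<Rightarrow> nat" where
  "mul390 a b = (if a = 2 \<and> b = 2 then 2 else if a = 2 \<and> b = 4 then 4 else 1)"

abbreviation "vx \<equiv> V 0"
abbreviation "vy \<equiv> V 1"
abbreviation "vz \<equiv> V 2"
abbreviation "x1 \<equiv> V 0"
abbreviation "x2 \<equiv> V 1"
abbreviation "x3 \<equiv> V 2"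
abbreviation "x4 \<equiv> V 3"
abbreviation sq :: "trm \<Rightarrow> trm" where "sq t \<equiv> Ml t t"

definition Sigma390 :: "(trm \<times> trm) set" where
  "Sigma390 = {
    (Ml (sq vx) vy, Ml vx vy),
    (Ml (Ml vx vy) vz, Ml (Ml vy vx) vz),
    (Ml (sq vx) (sq vy), sq (Ml vx vy)),
    (Ml (sq vx) (sq vy), Ml (sq vy) (sq vx)),
    (Ml (Ml vx vy) vz, Pl (Ml (Ml vx vy) vz) vy),
    (Ml vx vy, Pl (Ml vx vy) vy),
    (Ml vy vz, Pl (Ml vy vz) vy),
    (Pl (sq vx) (Ml vy vz), Ml (Ml (sq vx) vy) vz),
    (Pl (Ml x1 (sq x2)) (Ml x3 (sq x4)), Ml (Ml (Ml x1 x2) x3) (sq x4)),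
    (Pl (Ml x1 x2) (Ml x3 x4), Pl (Pl (Ml x1 x2) (Ml x3 x4)) (Ml x1 (sq x3)))
  }"

end

theory Submission
  imports Defs
begin

text \<open>
  By distributivity every term is a sum of words. Record three sets of variables of a term: its
  content, the variables of its words of length at least two, and the variables occurring in a
  non-final position of a word. S(4,390) detects all three: sending every variable other than
  \<open>x\<close> to the additive identity 2, and \<open>x\<close> to 1, 3 or 4, evaluates a term to 1 exactly when
  \<open>x\<close> lies in the respective set. So every identity of S(4,390) preserves the three sets.

  Conversely, in a model of \<open>\<Sigma>\<close> the identity \<open>x\<^sup>2y \<approx> xy\<close> turns a word
  \<open>x\<^sub>1 \<dots> x\<^sub>n y\<close> into \<open>p \<cdot> y\<close> with \<open>p = x\<^sub>1\<^sup>2 \<cdots> x\<^sub>n\<^sup>2\<close>, and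
  \<open>x\<^sup>2 + yz \<approx> x\<^sup>2yz\<close> makes such a product of squares the join of its factors. So the value
  of a term \<open>u\<close> lies above every variable of \<open>u\<close> and above \<open>p \<cdot> y\<close> for every product \<open>p\<close>
  of squares of non-final variables of \<open>u\<close> and every variable \<open>y\<close> of a long word of \<open>u\<close>.
  Comparing word by word, \<open>v \<le> u\<close> in the semilattice order whenever the three sets of \<open>v\<close>
  are contained in those of \<open>u\<close>; antisymmetry gives the identity \<open>u \<approx> v\<close>.
\<close>

fun foldr1 :: "('a \<Rightarrow> 'a \<Rightarrow> 'a) \<Rightarrow> 'a list \<Rightarrow> 'a" where
  "foldr1 f [x] = x"
| "foldr1 f (x # y # ys) = f x (foldr1 f (y # ys))"
| "foldr1 f [] = undefined"

lemma foldr1_Cons: "xs \<noteq> [] \<Longrightarrow> foldr1 f (x # xs) = f x (foldr1 f xs)"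
  by (cases xs) auto

lemma foldr1_closed:
  assumes "\<And>a b. a \<in> A \<Longrightarrow> b \<in> A \<Longrightarrow> f a b \<in> A" "xs \<noteq> []" "set xs \<subseteq> A"
  shows "foldr1 f xs \<in> A"
  using assms(2,3)
proof (induction xs)
  case (Cons x xs)
  then show ?case
    using assms(1) by (cases "xs = []") (auto simp: foldr1_Cons)
qed simp

lemma foldr1_append:
  assumes closed: "\<And>a b. a \<in> A \<Longrightarrow> b \<in> A \<Longrightarrow> f a b \<in> A"
    and assoc: "\<And>a b c. a \<in> A \<Longrightarrow> b \<in> A \<Longrightarrow> c \<in> A \<Longrightarrow> f (f a b) c = f a (f b c)"
    and "xs \<noteq> []" "ys \<noteq> []" "set xs \<subseteq> A" "set ys \<subseteq> A"
  shows "foldr1 f (xs @ ys) = f (foldr1 f xs) (foldr1 f ys)"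
  using assms(3-6)
proof (induction xs)
  case (Cons x xs)
  show ?case
  proof (cases "xs = []")
    case False
    then show ?thesis
      using Cons assoc foldr1_closed[OF closed] by (simp add: foldr1_Cons)
  qed (simp add: foldr1_Cons Cons.prems)
qed simp

section \<open>Terms as sums of words\<close>

fun words :: "trm \<Rightarrow> nat list list" where
  "words (V i) = [[i]]"
| "words (Pl s t) = words s @ words t"
| "words (Ml s t) = [u @ v. u \<leftarrow> words s, v \<leftarrow> words t]"

lemma words_not_Nil: "words t \<noteq> []"
  by (induction t) auto

lemma ex_word: "\<exists>w. w \<in> set (words t)"
  using words_not_Nil by (meson list.set_sel(1))

lemma Nil_notin_words: "[] \<notin> set (words t)"
  by (induction t) auto

definition content :: "trm \<Rightarrow> nat set" where
  "content t = {x. \<exists>w\<in>set (words t). x \<in> set w}"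

definition long_content :: "trm \<Rightarrow> nat set" where
  "long_content t = {x. \<exists>w\<in>set (words t). 2 \<le> length w \<and> x \<in> set w}"

definition init_content :: "trm \<Rightarrow> nat set" where
  "init_content t = {x. \<exists>w\<in>set (words t). x \<in> set (butlast w)}"

lemma content_simps [simp]:
  "content (V i) = {i}"
  "content (Pl s t) = content s \<union> content t"
  "content (Ml s t) = content s \<union> content t"
  unfolding content_def using ex_word[of s] ex_word[of t] by fastforce+

lemma words_Ml_iff: "w \<in> set (words (Ml s t)) \<longleftrightarrow> (\<exists>u\<in>set (words s). \<exists>v\<in>set (words t). w = u @ v)"
  by auto

lemma long_content_simps [simp]:
  "long_content (V i) = {}"
  "long_content (Pl s t) = long_content s \<union> long_content t"
  "long_content (Ml s t) = content s \<union> content t"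
proof -
  have "2 \<le> length (u @ v)" if "u \<in> set (words s)" "v \<in> set (words t)" for u v
  proof -
    have "u \<noteq> []" "v \<noteq> []"
      using that Nil_notin_words by blast+
    then show ?thesis by (cases u; cases v) auto
  qed
  then show "long_content (Ml s t) = content s \<union> content t"
    unfolding long_content_def content_def words_Ml_iff
    using ex_word[of s] ex_word[of t] by fastforce
qed (auto simp: long_content_def)

lemma init_content_simps [simp]:
  "init_content (V i) = {}"
  "init_content (Pl s t) = init_content s \<union> init_content t"
  "init_content (Ml s t) = content s \<union> init_content t"
proof -
  have "butlast (u @ v) = u @ butlast v" if "v \<in> set (words t)" for u v
    using that Nil_notin_words[of t] by (auto simp: butlast_append)
  then show "init_content (Ml s t) = content s \<union> init_content t"
    unfolding init_content_def content_def words_Ml_iff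
    using ex_word[of s] ex_word[of t] by fastforce
qed (auto simp: init_content_def)

lemma long_content_subset: "long_content t \<subseteq> content t"
  by (induction t) auto

lemma init_content_subset: "init_content t \<subseteq> content t"
  by (induction t) auto

lemma eval_cong: "(\<And>i. i \<in> content t \<Longrightarrow> \<rho> i = \<sigma> i) \<Longrightarrow> eval ad mu \<rho> t = eval ad mu \<sigma> t"
  by (induction t) auto

section \<open>The ai-semiring S(4,390)\<close>

lemma ai_semiring_S390: "ai_semiring S390 add390 mul390"
  unfolding ai_semiring_def S390_def by code_simp

lemma Sigma390_holds_in_S390: "\<forall>e\<in>Sigma390. sat S390 add390 mul390 e"
proof (unfold sat_def, intro ballI allI impI)
  fix e and \<rho> :: "nat \<Rightarrow> nat"
  assume e: "e \<in> Sigma390" and \<rho>: "\<forall>i. \<rho> i \<in> S390"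
  let ?\<sigma> = "(!) [\<rho> 0, \<rho> 1, \<rho> 2, \<rho> 3]"
  have "\<forall>a\<in>S390. \<forall>b\<in>S390. \<forall>c\<in>S390. \<forall>d\<in>S390. \<forall>(s, t)\<in>Sigma390.
      eval add390 mul390 ((!) [a, b, c, d]) s = eval add390 mul390 ((!) [a, b, c, d]) t"
    unfolding S390_def Sigma390_def by code_simp
  then have "eval add390 mul390 ?\<sigma> (fst e) = eval add390 mul390 ?\<sigma> (snd e)"
    using e \<rho> by fastforce
  moreover have "eval add390 mul390 \<rho> t = eval add390 mul390 ?\<sigma> t"
    if "content t \<subseteq> {0, 1, 2, 3}" for t
    using that by (intro eval_cong) (auto simp: numeral_eq_Suc)
  moreover have "content (fst e) \<subseteq> {0, 1, 2, 3}" "content (snd e) \<subseteq> {0, 1, 2, 3}"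
    using e by (auto simp: Sigma390_def)
  ultimately show "eval add390 mul390 \<rho> (fst e) = eval add390 mul390 \<rho> (snd e)"
    by simp
qed

lemma eval_S390_content:
  "eval add390 mul390 (\<lambda>i. if i = x then 1 else 2) t = (if x \<in> content t then 1 else 2)"
  by (induction t) (auto simp: add390_def mul390_def)

lemma eval_S390_long_content:
  "eval add390 mul390 (\<lambda>i. if i = x then 3 else 2) t =
    (if x \<in> long_content t then 1 else if x \<in> content t then 3 else 2)"
proof (induction t)
  case (Pl s t)
  then show ?case using long_content_subset[of s] long_content_subset[of t]
    by (cases "x \<in> long_content s"; cases "x \<in> content s";
        cases "x \<in> long_content t"; cases "x \<in> content t") (auto simp: add390_def)
next
  case (Ml s t)
  then show ?case using long_content_subset[of s] long_content_subset[of t]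
    by (cases "x \<in> content s"; cases "x \<in> content t") (auto simp: mul390_def)
qed simp

lemma eval_S390_init_content:
  "eval add390 mul390 (\<lambda>i. if i = x then 4 else 2) t =
    (if x \<in> init_content t then 1 else if x \<in> content t then 4 else 2)"
proof (induction t)
  case (Pl s t)
  then show ?case using init_content_subset[of s] init_content_subset[of t]
    by (cases "x \<in> init_content s"; cases "x \<in> content s";
        cases "x \<in> init_content t"; cases "x \<in> content t") (auto simp: add390_def)
next
  case (Ml s t)
  then show ?case using init_content_subset[of s] init_content_subset[of t]
    by (cases "x \<in> content s"; cases "x \<in> init_content t"; cases "x \<in> content t")
      (auto simp: mul390_def)
qed simp

lemma S390_sat_contents_eq:
  assumes "sat S390 add390 mul390 (u, v)"
  shows "content u = content v" "long_content u = long_content v" "init_content u = init_content v"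
proof -
  have test: "eval add390 mul390 (\<lambda>i. if i = x then c else 2) u
      = eval add390 mul390 (\<lambda>i. if i = x then c else 2) v" if "c \<in> {1, 3, 4}" for x c
    using assms that unfolding sat_def by (auto simp: S390_def)
  have "x \<in> content u \<longleftrightarrow> x \<in> content v" for x
    using test[of 1 x] by (simp add: eval_S390_content split: if_splits)
  moreover have "x \<in> long_content u \<longleftrightarrow> x \<in> long_content v" for x
    using test[of 3 x] by (simp add: eval_S390_long_content split: if_splits)
  moreover have "x \<in> init_content u \<longleftrightarrow> x \<in> init_content v" for x
    using test[of 4 x] by (simp add: eval_S390_init_content split: if_splits)
  ultimately show "content u = content v" "long_content u = long_content v"
    "init_content u = init_content v" by blast+
qed

locale ai_semiring_on =
  fixes A :: "'a set" and ad mu :: "'a \<Rightarrow> 'a \<Rightarrow> 'a"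
  assumes ai_semiring: "ai_semiring A ad mu"
begin

lemma add_closed: "a \<in> A \<Longrightarrow> b \<in> A \<Longrightarrow> ad a b \<in> A"
  and mult_closed: "a \<in> A \<Longrightarrow> b \<in> A \<Longrightarrow> mu a b \<in> A"
  and add_assoc: "a \<in> A \<Longrightarrow> b \<in> A \<Longrightarrow> c \<in> A \<Longrightarrow> ad (ad a b) c = ad a (ad b c)"
  and mult_assoc: "a \<in> A \<Longrightarrow> b \<in> A \<Longrightarrow> c \<in> A \<Longrightarrow> mu (mu a b) c = mu a (mu b c)"
  and add_commute: "a \<in> A \<Longrightarrow> b \<in> A \<Longrightarrow> ad a b = ad b a"
  and add_idem: "a \<in> A \<Longrightarrow> ad a a = a"
  and distrib_left: "a \<in> A \<Longrightarrow> b \<in> A \<Longrightarrow> c \<in> A \<Longrightarrow> mu a (ad b c) = ad (mu a b) (mu a c)"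
  and distrib_right: "a \<in> A \<Longrightarrow> b \<in> A \<Longrightarrow> c \<in> A \<Longrightarrow> mu (ad a b) c = ad (mu a c) (mu b c)"
  using ai_semiring unfolding ai_semiring_def by blast+

abbreviation below :: "'a \<Rightarrow> 'a \<Rightarrow> bool" (infix "\<sqsubseteq>" 50) where
  "a \<sqsubseteq> b \<equiv> ad a b = b"

lemma below_trans: "a \<in> A \<Longrightarrow> b \<in> A \<Longrightarrow> c \<in> A \<Longrightarrow> a \<sqsubseteq> b \<Longrightarrow> b \<sqsubseteq> c \<Longrightarrow> a \<sqsubseteq> c"
  by (metis add_assoc)

lemma below_antisym: "a \<in> A \<Longrightarrow> b \<in> A \<Longrightarrow> a \<sqsubseteq> b \<Longrightarrow> b \<sqsubseteq> a \<Longrightarrow> a = b"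
  by (metis add_commute)

lemma add_below_iff: "a \<in> A \<Longrightarrow> b \<in> A \<Longrightarrow> c \<in> A \<Longrightarrow> ad a b \<sqsubseteq> c \<longleftrightarrow> a \<sqsubseteq> c \<and> b \<sqsubseteq> c"
  by (metis add_assoc add_closed add_commute add_idem)

lemma mult_left_mono: "a \<in> A \<Longrightarrow> b \<in> A \<Longrightarrow> c \<in> A \<Longrightarrow> b \<sqsubseteq> c \<Longrightarrow> mu a b \<sqsubseteq> mu a c"
  by (metis distrib_left)

lemma foldr1_add_below_iff:
  "xs \<noteq> [] \<Longrightarrow> set xs \<subseteq> A \<Longrightarrow> c \<in> A \<Longrightarrow> foldr1 ad xs \<sqsubseteq> c \<longleftrightarrow> (\<forall>x\<in>set xs. x \<sqsubseteq> c)"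
proof (induction xs)
  case (Cons x xs)
  then show ?case
    by (cases "xs = []") (auto simp: foldr1_Cons add_below_iff foldr1_closed[OF add_closed])
qed simp

lemma mult_foldr1_add:
  "a \<in> A \<Longrightarrow> ys \<noteq> [] \<Longrightarrow> set ys \<subseteq> A \<Longrightarrow> mu a (foldr1 ad ys) = foldr1 ad (map (mu a) ys)"
proof (induction ys)
  case (Cons y ys)
  then show ?case
    by (cases "ys = []") (auto simp: foldr1_Cons distrib_left foldr1_closed[OF add_closed])
qed simp

lemma foldr1_add_mult_foldr1_add:
  assumes "xs \<noteq> []" "ys \<noteq> []" "set xs \<subseteq> A" "set ys \<subseteq> A"
  shows "mu (foldr1 ad xs) (foldr1 ad ys) = foldr1 ad [mu x y. x \<leftarrow> xs, y \<leftarrow> ys]"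
  using assms(1,3)
proof (induction xs)
  case (Cons x xs)
  show ?case
  proof (cases "xs = []")
    case True
    then show ?thesis using Cons.prems assms mult_foldr1_add by simp
  next
    case False
    have "mu (foldr1 ad (x # xs)) (foldr1 ad ys)
        = ad (mu x (foldr1 ad ys)) (mu (foldr1 ad xs) (foldr1 ad ys))"
      using False Cons.prems assms
      by (simp add: foldr1_Cons distrib_right foldr1_closed[OF add_closed])
    also have "\<dots> = foldr1 ad (map (mu x) ys @ [mu x y. x \<leftarrow> xs, y \<leftarrow> ys])"
      using False Cons assms mult_closed
      by (subst foldr1_append[OF add_closed add_assoc])
        (auto simp: mult_foldr1_add intro!: mult_closed)
    finally show ?thesis by simp
  qed
qed simp

abbreviation word_val :: "(nat \<Rightarrow> 'a) \<Rightarrow> nat list \<Rightarrow> 'a" where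
  "word_val \<rho> w \<equiv> foldr1 mu (map \<rho> w)"

context
  fixes \<rho> :: "nat \<Rightarrow> 'a"
  assumes \<rho>: "\<forall>i. \<rho> i \<in> A"
begin

lemma eval_closed: "eval ad mu \<rho> t \<in> A"
  by (induction t) (use \<rho> add_closed mult_closed in auto)

lemma word_val_closed: "w \<noteq> [] \<Longrightarrow> word_val \<rho> w \<in> A"
  by (rule foldr1_closed[OF mult_closed]) (use \<rho> in auto)

lemma word_vals_closed: "set (map (word_val \<rho>) (words t)) \<subseteq> A"
  using Nil_notin_words[of t] by (auto intro!: word_val_closed)

lemma eval_eq_sum_words: "eval ad mu \<rho> t = foldr1 ad (map (word_val \<rho>) (words t))"
proof (induction t)
  case (Pl s t)
  then show ?case
    using words_not_Nil word_vals_closed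
    by (simp add: foldr1_append[OF add_closed add_assoc])
next
  case (Ml s t)
  have "word_val \<rho> (u @ v) = mu (word_val \<rho> u) (word_val \<rho> v)"
    if "u \<in> set (words s)" "v \<in> set (words t)" for u v
  proof -
    have "u \<noteq> []" "v \<noteq> []"
      using that Nil_notin_words by blast+
    then show ?thesis
      using \<rho> by (simp add: foldr1_append[OF mult_closed mult_assoc] image_subset_iff)
  qed
  then have "map (word_val \<rho>) (words (Ml s t))
      = [mu x y. x \<leftarrow> map (word_val \<rho>) (words s), y \<leftarrow> map (word_val \<rho>) (words t)]"
    by (simp add: map_concat comp_def cong: map_cong)
  then show ?case
    using Ml words_not_Nil word_vals_closed
    by (simp add: foldr1_add_mult_foldr1_add)
qed simp

lemma eval_below_iff:
  "c \<in> A \<Longrightarrow> eval ad mu \<rho> t \<sqsubseteq> c \<longleftrightarrow> (\<forall>w\<in>set (words t). word_val \<rho> w \<sqsubseteq> c)"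
  using words_not_Nil word_vals_closed
  by (simp add: eval_eq_sum_words foldr1_add_below_iff)

lemma word_below_eval: "w \<in> set (words t) \<Longrightarrow> word_val \<rho> w \<sqsubseteq> eval ad mu \<rho> t"
  using eval_below_iff[OF eval_closed, of t t] add_idem[OF eval_closed] by blast

end

end

section \<open>Models of \<open>\<Sigma>\<close>\<close>

locale Sigma390_model = ai_semiring_on +
  assumes Sigma390_holds: "\<forall>e\<in>Sigma390. sat A ad mu e"
begin

lemma Sigma390_instance:
  "(s, t) \<in> Sigma390 \<Longrightarrow> \<forall>i. \<rho> i \<in> A \<Longrightarrow> eval ad mu \<rho> s = eval ad mu \<rho> t"
  using Sigma390_holds unfolding sat_def by fastforce

lemma mult_left_idem: "a \<in> A \<Longrightarrow> b \<in> A \<Longrightarrow> mu a (mu a b) = mu a b"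
  using Sigma390_instance[of "Ml (sq vx) vy" "Ml vx vy" "\<lambda>i. if i = 0 then a else b"]
  by (simp add: Sigma390_def mult_assoc)

lemma sq_mult_sq_commute: "a \<in> A \<Longrightarrow> b \<in> A \<Longrightarrow> mu (mu a a) (mu b b) = mu (mu b b) (mu a a)"
  using Sigma390_instance[of "Ml (sq vx) (sq vy)" "Ml (sq vy) (sq vx)" "\<lambda>i. if i = 0 then a else b"]
  by (simp add: Sigma390_def)

lemma below_mult_left: "a \<in> A \<Longrightarrow> b \<in> A \<Longrightarrow> a \<sqsubseteq> mu a b"
  using Sigma390_instance[of "Ml vy vz" "Pl (Ml vy vz) vy" "\<lambda>i. if i = 1 then a else b"]
  by (simp add: Sigma390_def add_commute mult_closed)

lemma below_mult_right: "a \<in> A \<Longrightarrow> b \<in> A \<Longrightarrow> b \<sqsubseteq> mu a b"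
  using Sigma390_instance[of "Ml vx vy" "Pl (Ml vx vy) vy" "\<lambda>i. if i = 0 then a else b"]
  by (simp add: Sigma390_def add_commute mult_closed)

lemma sq_add_mult: "a \<in> A \<Longrightarrow> b \<in> A \<Longrightarrow> c \<in> A \<Longrightarrow> ad (mu a a) (mu b c) = mu a (mu b c)"
  using Sigma390_instance[of "Pl (sq vx) (Ml vy vz)" "Ml (Ml (sq vx) vy) vz"
      "\<lambda>i. if i = 0 then a else if i = 1 then b else c"]
  by (simp add: Sigma390_def mult_assoc mult_closed mult_left_idem)

definition prod_sq :: "'a list \<Rightarrow> 'a" where
  "prod_sq xs = foldr1 mu (map (\<lambda>a. mu a a) xs)"

lemma prod_sq_single [simp]: "prod_sq [a] = mu a a"
  by (simp add: prod_sq_def)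

lemma prod_sq_Cons: "xs \<noteq> [] \<Longrightarrow> prod_sq (x # xs) = mu (mu x x) (prod_sq xs)"
  by (simp add: prod_sq_def foldr1_Cons)

lemma prod_sq_closed: "xs \<noteq> [] \<Longrightarrow> set xs \<subseteq> A \<Longrightarrow> prod_sq xs \<in> A"
  unfolding prod_sq_def by (rule foldr1_closed[OF mult_closed]) (auto intro: mult_closed)

lemma prod_sq_snoc: "xs \<noteq> [] \<Longrightarrow> set xs \<subseteq> A \<Longrightarrow> y \<in> A \<Longrightarrow> prod_sq (xs @ [y]) = mu (prod_sq xs) (mu y y)"
  unfolding prod_sq_def map_append
  by (subst foldr1_append[OF mult_closed mult_assoc]) (auto intro: mult_closed)

lemma sq_mult_prod_sq_absorb:
  "x \<in> set ys \<Longrightarrow> set ys \<subseteq> A \<Longrightarrow> mu (mu x x) (prod_sq ys) = prod_sq ys"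
proof (induction ys)
  case (Cons y ys)
  show ?case
  proof (cases "ys = []")
    case True
    then show ?thesis using Cons.prems by (simp add: mult_assoc mult_closed mult_left_idem)
  next
    case False
    have closed: "x \<in> A" "y \<in> A" "prod_sq ys \<in> A"
      using False Cons.prems prod_sq_closed by auto
    have "mu (mu x x) (prod_sq (y # ys)) = mu (mu (mu x x) (mu y y)) (prod_sq ys)"
      using False closed by (simp add: prod_sq_Cons mult_assoc mult_closed)
    also have "\<dots> = mu (mu (mu y y) (mu x x)) (prod_sq ys)"
      using closed by (simp add: sq_mult_sq_commute[of x y])
    also have "\<dots> = mu (mu y y) (mu (mu x x) (prod_sq ys))"
      using closed by (simp add: mult_assoc mult_closed)
    also have "\<dots> = prod_sq (y # ys)"
    proof (cases "x = y")
      case True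
      then show ?thesis
        using False closed by (simp add: prod_sq_Cons mult_assoc mult_closed mult_left_idem)
    next
      case False
      then show ?thesis using Cons \<open>ys \<noteq> []\<close> by (simp add: prod_sq_Cons)
    qed
    finally show ?thesis .
  qed
qed simp

lemma prod_sq_mult_absorb:
  "xs \<noteq> [] \<Longrightarrow> set xs \<subseteq> set ys \<Longrightarrow> set ys \<subseteq> A \<Longrightarrow> mu (prod_sq xs) (prod_sq ys) = prod_sq ys"
proof (induction xs)
  case (Cons x xs)
  show ?case
  proof (cases "xs = []")
    case False
    moreover have "x \<in> A" "prod_sq xs \<in> A" "prod_sq ys \<in> A"
      using Cons.prems False by (auto intro!: prod_sq_closed)
    ultimately have
      "mu (prod_sq (x # xs)) (prod_sq ys) = mu (mu x x) (mu (prod_sq xs) (prod_sq ys))"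
      by (simp add: prod_sq_Cons mult_assoc mult_closed)
    then show ?thesis using Cons False by (simp add: sq_mult_prod_sq_absorb)
  qed (use Cons.prems sq_mult_prod_sq_absorb in simp)
qed simp

lemma prod_sq_idem: "xs \<noteq> [] \<Longrightarrow> set xs \<subseteq> A \<Longrightarrow> mu (prod_sq xs) (prod_sq xs) = prod_sq xs"
  by (simp add: prod_sq_mult_absorb)

lemma prod_sq_Cons_eq_add:
  assumes "xs \<noteq> []" "set (x # xs) \<subseteq> A"
  shows "prod_sq (x # xs) = ad (mu x x) (prod_sq xs)"
proof -
  obtain y ys where xs: "xs = y # ys" using assms(1) by (cases xs) auto
  show ?thesis
  proof (cases "ys = []")
    case True
    then show ?thesis
      using assms xs by (simp add: prod_sq_Cons sq_add_mult mult_assoc mult_closed mult_left_idem)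
  next
    case False
    then show ?thesis using assms xs prod_sq_closed[of ys]
      by (simp add: prod_sq_Cons sq_add_mult mult_assoc mult_closed mult_left_idem)
  qed
qed

lemma sq_below_prod_sq: "x \<in> set ys \<Longrightarrow> set ys \<subseteq> A \<Longrightarrow> mu x x \<sqsubseteq> prod_sq ys"
proof -
  assume "x \<in> set ys" "set ys \<subseteq> A"
  then have "x \<in> A" "ys \<noteq> []" by auto
  then have "mu x x \<sqsubseteq> mu (mu x x) (prod_sq ys)"
    using \<open>set ys \<subseteq> A\<close> by (simp add: below_mult_left mult_closed prod_sq_closed)
  then show ?thesis
    using \<open>x \<in> set ys\<close> \<open>set ys \<subseteq> A\<close> by (simp add: sq_mult_prod_sq_absorb)
qed

lemma prod_sq_below:
  assumes "c \<in> A"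
  shows "xs \<noteq> [] \<Longrightarrow> set xs \<subseteq> A \<Longrightarrow> (\<And>x. x \<in> set xs \<Longrightarrow> mu x x \<sqsubseteq> c) \<Longrightarrow>
    prod_sq xs \<sqsubseteq> c"
proof (induction xs)
  case (Cons x xs)
  show ?case
  proof (cases "xs = []")
    case False
    then have "prod_sq xs \<sqsubseteq> c" "prod_sq xs \<in> A"
      using Cons.IH Cons.prems(2,3) prod_sq_closed[of xs] by auto
    then show ?thesis
      using Cons.prems False assms by (simp add: prod_sq_Cons_eq_add add_below_iff mult_closed)
  qed (use Cons.prems in simp)
qed simp

lemma foldr1_mult_eq_prod_sq_mult_last:
  "2 \<le> length xs \<Longrightarrow> set xs \<subseteq> A \<Longrightarrow> foldr1 mu xs = mu (prod_sq (butlast xs)) (last xs)"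
proof (induction xs)
  case (Cons x xs)
  then have xs: "xs \<noteq> []" "x \<in> A" "set xs \<subseteq> A" by auto
  show ?case
  proof (cases "length xs = 1")
    case True
    then obtain y where "xs = [y]" by (cases xs) auto
    then show ?thesis using xs by (simp add: mult_assoc mult_left_idem)
  next
    case False
    then have "2 \<le> length xs"
      using xs(1) by (cases xs) (auto simp: Suc_le_eq)
    then have IH: "foldr1 mu xs = mu (prod_sq (butlast xs)) (last xs)" and bl: "butlast xs \<noteq> []"
      using Cons.IH xs by (auto simp flip: length_greater_0_conv)
    have closed: "prod_sq (butlast xs) \<in> A" "last xs \<in> A"
      using xs bl by (auto intro!: prod_sq_closed dest: in_set_butlastD)
    have "foldr1 mu (x # xs) = mu x (mu (prod_sq (butlast xs)) (last xs))"
      using xs IH by (simp add: foldr1_Cons)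
    also have "\<dots> = mu (prod_sq (x # butlast xs)) (last xs)"
      using xs bl closed by (simp add: prod_sq_Cons mult_assoc mult_closed mult_left_idem)
    finally show ?thesis using xs by simp
  qed
qed simp

context
  fixes \<rho> :: "nat \<Rightarrow> 'a"
  assumes \<rho>: "\<forall>i. \<rho> i \<in> A"
begin

lemma letter_below_word_val: "x \<in> set w \<Longrightarrow> \<rho> x \<sqsubseteq> word_val \<rho> w"
proof (induction w)
  case (Cons y w)
  show ?case
  proof (cases "w = []")
    case False
    have closed: "\<rho> y \<in> A" "word_val \<rho> w \<in> A"
      using \<rho> False word_val_closed by auto
    show ?thesis
    proof (cases "x = y")
      case True
      then show ?thesis using closed False by (simp add: foldr1_Cons below_mult_left)
    next
      case False
      then have "\<rho> x \<sqsubseteq> word_val \<rho> w" using Cons by simp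
      moreover have "word_val \<rho> w \<sqsubseteq> mu (\<rho> y) (word_val \<rho> w)"
        using closed by (rule below_mult_right)
      ultimately show ?thesis
        using closed \<rho> \<open>w \<noteq> []\<close> below_trans[of "\<rho> x" "word_val \<rho> w"]
        by (simp add: foldr1_Cons mult_closed)
    qed
  qed (use Cons.prems \<rho> add_idem in simp)
qed simp

lemma word_val_long:
  assumes "2 \<le> length w"
  shows "word_val \<rho> w = mu (prod_sq (map \<rho> (butlast w))) (\<rho> (last w))"
proof -
  have "w \<noteq> []" using assms by auto
  then show ?thesis
    using assms \<rho> foldr1_mult_eq_prod_sq_mult_last[of "map \<rho> w"]
    by (auto simp: map_butlast last_map)
qed

lemma prod_sq_below_eval:
  assumes "xs \<noteq> []" "set xs \<subseteq> init_content u"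
  shows "prod_sq (map \<rho> xs) \<sqsubseteq> eval ad mu \<rho> u"
proof (rule prod_sq_below)
  show "eval ad mu \<rho> u \<in> A" "map \<rho> xs \<noteq> []" "set (map \<rho> xs) \<subseteq> A"
    using assms(1) \<rho> eval_closed[OF \<rho>] by auto
  fix a assume "a \<in> set (map \<rho> xs)"
  then obtain x where "x \<in> set xs" "a = \<rho> x" by auto
  then obtain w where w: "w \<in> set (words u)" "x \<in> set (butlast w)"
    using assms(2) unfolding init_content_def by auto
  let ?q = "prod_sq (map \<rho> (butlast w))"
  have long: "2 \<le> length w"
    using w(2) by (cases w rule: rev_cases) (auto simp: Suc_le_eq)
  have closed: "a \<in> A" "?q \<in> A" "word_val \<rho> w \<in> A" "eval ad mu \<rho> u \<in> A"
    using \<rho> \<open>a = \<rho> x\<close> w(2) long by (auto intro!: prod_sq_closed word_val_closed eval_closed)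
  have "mu a a \<sqsubseteq> ?q"
    using \<open>a = \<rho> x\<close> w(2) \<rho> by (auto intro!: sq_below_prod_sq)
  moreover have "?q \<sqsubseteq> word_val \<rho> w"
    using long closed \<rho> by (simp add: word_val_long below_mult_left)
  moreover have "word_val \<rho> w \<sqsubseteq> eval ad mu \<rho> u"
    using w(1) by (rule word_below_eval[OF \<rho>])
  ultimately show "mu a a \<sqsubseteq> eval ad mu \<rho> u"
    using closed by (meson below_trans mult_closed)
qed

lemma prod_sq_mult_below_eval:
  assumes "xs \<noteq> []" "set xs \<subseteq> init_content u" "y \<in> long_content u"
  shows "mu (prod_sq (map \<rho> xs)) (\<rho> y) \<sqsubseteq> eval ad mu \<rho> u"
proof -
  let ?p = "prod_sq (map \<rho> xs)" and ?e = "eval ad mu \<rho> u"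
  have p: "?p \<in> A" "?p \<sqsubseteq> ?e"
    using assms(1,2) \<rho> by (auto intro!: prod_sq_closed prod_sq_below_eval)
  have closed: "\<rho> y \<in> A" "?e \<in> A"
    using \<rho> eval_closed[OF \<rho>] by auto
  obtain w where w: "w \<in> set (words u)" "2 \<le> length w" "y \<in> set w"
    using assms(3) unfolding long_content_def by auto
  then have "y \<in> set (butlast w) \<or> y = last w"
    by (cases w rule: rev_cases) auto
  then show ?thesis
  proof
    assume "y \<in> set (butlast w)"
    then have "y \<in> init_content u"
      using w(1) by (auto simp: init_content_def)
    then have "prod_sq (map \<rho> (xs @ [y])) \<sqsubseteq> ?e"
      using assms(2) by (intro prod_sq_below_eval) auto
    moreover have "prod_sq (map \<rho> (xs @ [y])) = mu ?p (mu (\<rho> y) (\<rho> y))"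
      using assms(1) \<rho> by (simp add: prod_sq_snoc image_subset_iff)
    moreover have "mu ?p (\<rho> y) \<sqsubseteq> mu ?p (mu (\<rho> y) (\<rho> y))"
      using p closed by (simp add: mult_left_mono below_mult_left mult_closed)
    ultimately show ?thesis
      using below_trans[of "mu ?p (\<rho> y)" "mu ?p (mu (\<rho> y) (\<rho> y))" ?e] p closed
      by (simp add: mult_closed)
  next
    assume y: "y = last w"
    let ?q = "prod_sq (map \<rho> (butlast w))"
    have q: "?q \<in> A"
      using w(2) \<rho> by (intro prod_sq_closed) (auto simp flip: length_greater_0_conv)
    have "mu ?p (\<rho> y) \<sqsubseteq> mu ?p (mu ?q (\<rho> y))"
      using p q closed by (simp add: mult_left_mono below_mult_right mult_closed)
    moreover have "mu ?p (mu ?q (\<rho> y)) = ad ?p (mu ?q (\<rho> y))"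
      using sq_add_mult[of ?p ?q "\<rho> y"] prod_sq_idem[of "map \<rho> xs"] assms(1) p q closed \<rho>
      by (simp add: image_subset_iff)
    moreover have "ad ?p (mu ?q (\<rho> y)) \<sqsubseteq> ?e"
      using p q closed word_below_eval[OF \<rho> w(1)] word_val_long[OF w(2)] y
      by (simp add: add_below_iff mult_closed)
    ultimately show ?thesis
      using below_trans[of "mu ?p (\<rho> y)" "mu ?p (mu ?q (\<rho> y))" ?e] p q closed
      by (simp add: mult_closed add_closed)
  qed
qed

lemma eval_below_eval:
  assumes "content v \<subseteq> content u" "long_content v \<subseteq> long_content u"
    and "init_content v \<subseteq> init_content u"
  shows "eval ad mu \<rho> v \<sqsubseteq> eval ad mu \<rho> u"
  unfolding eval_below_iff[OF \<rho> eval_closed[OF \<rho>]]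
proof
  fix w assume w: "w \<in> set (words v)"
  show "word_val \<rho> w \<sqsubseteq> eval ad mu \<rho> u"
  proof (cases "2 \<le> length w")
    case True
    have "butlast w \<noteq> []"
      using True by (cases w rule: rev_cases) auto
    moreover have "set (butlast w) \<subseteq> init_content v"
      using w by (auto simp: init_content_def)
    moreover have "last w \<in> long_content v"
      using w True unfolding long_content_def by (auto intro!: bexI[of _ w] last_in_set)
    ultimately show ?thesis
      using True assms(2,3) prod_sq_mult_below_eval[of "butlast w" u "last w"]
      by (auto simp: word_val_long)
  next
    case False
    then obtain x where "w = [x]"
      using w Nil_notin_words[of v] by (cases w) (auto simp: Suc_le_eq)
    then have "x \<in> content v" using w by (auto simp: content_def intro!: bexI[of _ "[x]"])
    then have "x \<in> content u" using assms(1) by blast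
    then obtain w' where w': "w' \<in> set (words u)" "x \<in> set w'" by (auto simp: content_def)
    then have "w' \<noteq> []" by auto
    then show ?thesis
      using below_trans[of "\<rho> x" "word_val \<rho> w'" "eval ad mu \<rho> u"] \<open>w = [x]\<close> \<rho>
        letter_below_word_val[OF w'(2)] word_below_eval[OF \<rho> w'(1)]
        word_val_closed eval_closed[OF \<rho>]
      by simp
  qed
qed

end

end

theorem proposition6p11:
  fixes A :: "'a set" and ad mu :: "'a \<Rightarrow> 'a \<Rightarrow> 'a"
  shows "(ai_semiring S390 add390 mul390 \<and> (\<forall>e\<in>Sigma390. sat S390 add390 mul390 e))
       \<and> ((ai_semiring A ad mu \<and> (\<forall>e\<in>Sigma390. sat A ad mu e))
            \<longrightarrow> (\<forall>e. sat S390 add390 mul390 e \<longrightarrow> sat A ad mu e))"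
proof (intro conjI impI allI)
  show "ai_semiring S390 add390 mul390" by (rule ai_semiring_S390)
  show "\<forall>e\<in>Sigma390. sat S390 add390 mul390 e" by (rule Sigma390_holds_in_S390)
  fix e assume "ai_semiring A ad mu \<and> (\<forall>e\<in>Sigma390. sat A ad mu e)"
    and S390_sat: "sat S390 add390 mul390 e"
  then interpret Sigma390_model A ad mu
    by unfold_locales auto
  obtain u v where e: "e = (u, v)" by fastforce
  note contents = S390_sat_contents_eq[OF S390_sat[unfolded e]]
  show "sat A ad mu e"
    unfolding sat_def e
    using contents by (auto intro!: below_antisym eval_closed eval_below_eval)
qed

end
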